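(* Let $L_1,L_2\ge 1$ be integers, $S=\{0,1,\dots,L_1\}\times\{0,1,\dots,L_2\}$, $N=\{-1,0,1\}^2$, and let $R$ be a discrete-time Markov chain on $S$ with transition probabilities $p(n,n+u)$, $u\in N$, where $p(n,n+u)=0$ whenever $n+u\notin S$. Let $F:S\to[0,\infty)$ and define $F^0\equiv 0$ and, for $t\ge 0$, $F^{t+1}(n)=F(n)+\sum_{u\in N}p(n,n+u)F^{t}(n+u)$. Let $e_1=(1,0)$, $e_2=(0,1)$, and for $s\in\{1,2\}$ and $n\in S$ with $n+e_s\in S$ set $D^t_s(n)=F^t(n+e_s)-F^t(n)$. Assume that there are real constants $c_{s,n,v,u}$ ($s,v\in\{1,2\}$, $n\in S$ with $n+e_s\in S$, $u\in N$), with $c_{s,n,v,u}=0$ whenever $n+u+e_v\notin S$ or $n+u\notin S$, such that for all $t\ge 0$, all $s\in\{1,2\}$ and all $n$ with $n+e_s\in S$, $$D^{t+1}_s(n)=F(n+e_s)-F(n)+\sum_{v=1}^{2}\sum_{u\in N}c_{s,n,v,u}\,D^t_v(n+u).$$ Suppose that functions $A_s,B_s$ (defined on $\{n\in S: n+e_s\in S\}$, $s=1,2$) take values in $[0,\infty)$ and satisfy, for all $s\in\{1,2\}$ and all $n$ with $n+e_s\in S$, $$F(n+e_s)-F(n)+\sum_{v=1}^{2}\sum_{u\in N}\max\{-c_{s,n,v,u}A_v(n+u),\;c_{s,n,v,u}B_v(n+u)\}\le B_s(n),$$ $$F(n)-F(n+e_s)+\sum_{v=1}^{2}\sum_{u\in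 N}\max\{-c_{s,n,v,u}B_v(n+u),\;c_{s,n,v,u}A_v(n+u)\}\le A_s(n),$$ where terms with $c_{s,n,v,u}=0$ are taken to be $0$. Then for all $t\ge 0$, $s\in\{1,2\}$ and $n$ with $n+e_s\in S$, $$-A_s(n)\le D^t_s(n)\le B_s(n).$$
   Context: $F^t(n)$ is the expected cumulative reward over $t$ steps of the chain started in $n$ with one-step reward $F$; the differences $D^t_s(n)$ are called bias terms. *)

theory Defs
  imports Complex_Main
begin

type_synonym site = "int \<times> int"

definition padd :: "site \<Rightarrow> site \<Rightarrow> site" (infixl "\<oplus>" 65) where
  "n \<oplus> u = (fst n + fst u, snd n + snd u)"

definition Sset :: "int \<Rightarrow> int \<Rightarrow> site set" where
  "Sset L1 L2 = {0..L1} \<times> {0..L2}"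

definition Nset :: "site set" where
  "Nset = {-1,0,1} \<times> {-1,0,1}"

definition unit_e :: "nat \<Rightarrow> site" where
  "unit_e s = (if s = 1 then (1,0) else (0,1))"

primrec Fpow :: "(site \<Rightarrow> site \<Rightarrow> real) \<Rightarrow> (site \<Rightarrow> real) \<Rightarrow> nat \<Rightarrow> site \<Rightarrow> real" where
  "Fpow p F 0 n = 0"
| "Fpow p F (Suc t) n = F n + (\<Sum>u\<in>Nset. p n (n \<oplus> u) * Fpow p F t (n \<oplus> u))"

definition Dbias :: "(site \<Rightarrow> site \<Rightarrow> real) \<Rightarrow> (site \<Rightarrow> real) \<Rightarrow> nat \<Rightarrow> nat \<Rightarrow> site \<Rightarrow> real" where
  "Dbias p F t s n = Fpow p F t (n \<oplus> unit_e s) - Fpow p F t n"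

end

theory Submission
  imports Defs
begin

(* If every D^t_v lies in [-A_v, B_v], each term c * D^t_v(n+u) of the
   recursion is at most the corresponding max in the hypothesis on B, and its negative at most
   the one in the hypothesis on A; summing gives the bounds for D^(t+1)_s.  Since c vanishes
   whenever n+u or n+u+e_v leaves the state space, the induction hypothesis is only invoked
   where it is available. *)

lemma mult_le_max_of_interval:
  fixes c d a b :: real
  assumes "- a \<le> d" "d \<le> b"
  shows "c * d \<le> max (- c * a) (c * b)"
proof (cases "c \<ge> 0")
  case True
  then show ?thesis using mult_left_mono[OF assms(2) True] by simp
next
  case False
  then have "c * d \<le> c * - a"
    using mult_left_mono_neg[OF assms(1)] by simp
  then show ?thesis by simp
qed

lemma sum_mult_le_sum_max_if:
  fixes c d a b :: "'i \<Rightarrow> real"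
  assumes "\<And>i. i \<in> I \<Longrightarrow> c i \<noteq> 0 \<Longrightarrow> - a i \<le> d i \<and> d i \<le> b i"
  shows "(\<Sum>i\<in>I. c i * d i) \<le> (\<Sum>i\<in>I. if c i = 0 then 0 else max (- c i * a i) (c i * b i))"
  using assms mult_le_max_of_interval by (intro sum_mono) auto

lemma affine_sum_bounds:
  fixes f :: real and c d a b :: "'v \<Rightarrow> 'u \<Rightarrow> real"
  assumes bounds: "\<And>v u. v \<in> V \<Longrightarrow> u \<in> U \<Longrightarrow> c v u \<noteq> 0 \<Longrightarrow> - a v u \<le> d v u \<and> d v u \<le> b v u"
    and upper: "f + (\<Sum>v\<in>V. \<Sum>u\<in>U. if c v u = 0 then 0
                   else max (- c v u * a v u) (c v u * b v u)) \<le> B"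
    and lower: "- f + (\<Sum>v\<in>V. \<Sum>u\<in>U. if c v u = 0 then 0
                   else max (- c v u * b v u) (c v u * a v u)) \<le> A"
  shows "- A \<le> f + (\<Sum>v\<in>V. \<Sum>u\<in>U. c v u * d v u)
    \<and> f + (\<Sum>v\<in>V. \<Sum>u\<in>U. c v u * d v u) \<le> B"
proof -
  have "(\<Sum>v\<in>V. \<Sum>u\<in>U. c v u * d v u) \<le>
      (\<Sum>v\<in>V. \<Sum>u\<in>U. if c v u = 0 then 0 else max (- c v u * a v u) (c v u * b v u))"
    using bounds by (intro sum_mono sum_mult_le_sum_max_if)
  moreover have "(\<Sum>v\<in>V. \<Sum>u\<in>U. c v u * - d v u) \<le>
      (\<Sum>v\<in>V. \<Sum>u\<in>U. if c v u = 0 then 0 else max (- c v u * b v u) (c v u * a v u))"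
  proof (rule sum_mono)
    fix v assume "v \<in> V"
    with bounds show "(\<Sum>u\<in>U. c v u * - d v u) \<le>
        (\<Sum>u\<in>U. if c v u = 0 then 0 else max (- c v u * b v u) (c v u * a v u))"
      by (intro sum_mult_le_sum_max_if) force
  qed
  moreover have "(\<Sum>v\<in>V. \<Sum>u\<in>U. c v u * - d v u) = - (\<Sum>v\<in>V. \<Sum>u\<in>U. c v u * d v u)"
    by (simp add: sum_negf)
  ultimately show ?thesis using upper lower by linarith
qed

theorem mainTheorem1:
  fixes L1 L2 :: int
    and p :: "site \<Rightarrow> site \<Rightarrow> real"
    and F :: "site \<Rightarrow> real"
    and c :: "nat \<Rightarrow> site \<Rightarrow> nat \<Rightarrow> site \<Rightarrow> real"
    and A B :: "nat \<Rightarrow> site \<Rightarrow> real"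
  assumes L1: "L1 \<ge> 1" and L2: "L2 \<ge> 1"
    and p_nonneg: "\<And>n u. n \<in> Sset L1 L2 \<Longrightarrow> u \<in> Nset \<Longrightarrow> p n (n \<oplus> u) \<ge> 0"
    and p_sum: "\<And>n. n \<in> Sset L1 L2 \<Longrightarrow> (\<Sum>u\<in>Nset. p n (n \<oplus> u)) = 1"
    and p_zero: "\<And>n u. n \<in> Sset L1 L2 \<Longrightarrow> u \<in> Nset \<Longrightarrow> n \<oplus> u \<notin> Sset L1 L2 \<Longrightarrow> p n (n \<oplus> u) = 0"
    and F_nonneg: "\<And>n. n \<in> Sset L1 L2 \<Longrightarrow> F n \<ge> 0"
    and c_zero: "\<And>s n v u. s \<in> {1,2} \<Longrightarrow> n \<in> Sset L1 L2 \<Longrightarrow> n \<oplus> unit_e s \<in> Sset L1 L2 \<Longrightarrow>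
        v \<in> {1,2} \<Longrightarrow> u \<in> Nset \<Longrightarrow>
        (n \<oplus> u \<oplus> unit_e v \<notin> Sset L1 L2 \<or> n \<oplus> u \<notin> Sset L1 L2) \<Longrightarrow> c s n v u = 0"
    and D_rec: "\<And>t s n. s \<in> {1,2} \<Longrightarrow> n \<in> Sset L1 L2 \<Longrightarrow> n \<oplus> unit_e s \<in> Sset L1 L2 \<Longrightarrow>
        Dbias p F (Suc t) s n = F (n \<oplus> unit_e s) - F n
          + (\<Sum>v\<in>{1,2}. \<Sum>u\<in>Nset. c s n v u * Dbias p F t v (n \<oplus> u))"
    and A_nonneg: "\<And>s n. s \<in> {1,2} \<Longrightarrow> n \<in> Sset L1 L2 \<Longrightarrow> n \<oplus> unit_e s \<in> Sset L1 L2 \<Longrightarrow> A s n \<ge> 0"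
    and B_nonneg: "\<And>s n. s \<in> {1,2} \<Longrightarrow> n \<in> Sset L1 L2 \<Longrightarrow> n \<oplus> unit_e s \<in> Sset L1 L2 \<Longrightarrow> B s n \<ge> 0"
    and B_ineq: "\<And>s n. s \<in> {1,2} \<Longrightarrow> n \<in> Sset L1 L2 \<Longrightarrow> n \<oplus> unit_e s \<in> Sset L1 L2 \<Longrightarrow>
        F (n \<oplus> unit_e s) - F n
          + (\<Sum>v\<in>{1,2}. \<Sum>u\<in>Nset. (if c s n v u = 0 then 0
               else max (- c s n v u * A v (n \<oplus> u)) (c s n v u * B v (n \<oplus> u)))) \<le> B s n"
    and A_ineq: "\<And>s n. s \<in> {1,2} \<Longrightarrow> n \<in> Sset L1 L2 \<Longrightarrow> n \<oplus> unit_e s \<in> Sset L1 L2 \<Longrightarrow>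
        F n - F (n \<oplus> unit_e s)
          + (\<Sum>v\<in>{1,2}. \<Sum>u\<in>Nset. (if c s n v u = 0 then 0
               else max (- c s n v u * B v (n \<oplus> u)) (c s n v u * A v (n \<oplus> u)))) \<le> A s n"
  shows "\<forall>t s n. s \<in> {1,2} \<longrightarrow> n \<in> Sset L1 L2 \<longrightarrow> n \<oplus> unit_e s \<in> Sset L1 L2 \<longrightarrow>
           - A s n \<le> Dbias p F t s n \<and> Dbias p F t s n \<le> B s n"
proof
  fix t
  show "\<forall>s n. s \<in> {1,2} \<longrightarrow> n \<in> Sset L1 L2 \<longrightarrow> n \<oplus> unit_e s \<in> Sset L1 L2 \<longrightarrow>
           - A s n \<le> Dbias p F t s n \<and> Dbias p F t s n \<le> B s n"
  proof (induction t)
    case 0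
    then show ?case using A_nonneg B_nonneg by (simp add: Dbias_def)
  next
    case (Suc t)
    show ?case
    proof (intro allI impI)
      fix s n assume s: "s \<in> {1,2::nat}" and n: "n \<in> Sset L1 L2" and ne: "n \<oplus> unit_e s \<in> Sset L1 L2"
      have IH: "- A v (n \<oplus> u) \<le> Dbias p F t v (n \<oplus> u) \<and> Dbias p F t v (n \<oplus> u) \<le> B v (n \<oplus> u)"
        if "v \<in> {1,2}" "u \<in> Nset" "c s n v u \<noteq> 0" for v u
        using that c_zero[OF s n ne] Suc.IH by blast
      from affine_sum_bounds[OF IH B_ineq[OF s n ne]] A_ineq[OF s n ne]
      show "- A s n \<le> Dbias p F (Suc t) s n \<and> Dbias p F (Suc t) s n \<le> B s n"
        unfolding D_rec[OF s n ne] by simp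
    qed
  qed
qed

end
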